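(* If $n$ is odd, then $K_n$ can be (smoothly) embedded in $\mathbb{R}^{n+1}$.
   Context: $K_n=(S^1)^n/\bigl((z_1,\ldots,z_{n-1},z_n)\sim(\overline{z}_1,\ldots,\overline{z}_{n-1},-z_n)\bigr)$, where $S^1\subset\mathbb{C}$ is the unit circle and $\overline{z}$ is complex conjugation. *)

theory Defs
  imports "HOL-Analysis.Analysis"
begin

definition partial_deriv :: "'n::finite \<Rightarrow> (real^'n \<Rightarrow> 'b::real_normed_vector) \<Rightarrow> real^'n \<Rightarrow> 'b" where
  "partial_deriv i f x = frechet_derivative f (at x) (axis i 1)"

fun Ck_on :: "nat \<Rightarrow> (real^'n::finite) set \<Rightarrow> (real^'n \<Rightarrow> 'b::real_normed_vector) \<Rightarrow> bool" where
  "Ck_on 0 U f = continuous_on U f"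
| "Ck_on (Suc k) U f = (f differentiable_on U \<and> (\<forall>i. Ck_on k U (partial_deriv i f)))"

definition smooth_on :: "(real^'n::finite) set \<Rightarrow> (real^'n \<Rightarrow> 'b::real_normed_vector) \<Rightarrow> bool" where
  "smooth_on U f = (\<forall>k. Ck_on k U f)"

definition torus :: "(complex^'n::finite) set" where
  "torus = {z. \<forall>i. norm (z $ i) = 1}"

definition angle_param :: "real^'n::finite \<Rightarrow> complex^'n" where
  "angle_param t = (\<chi> i. cis (t $ i))"

definition Kinv :: "'n::finite \<Rightarrow> complex^'n \<Rightarrow> complex^'n" where
  "Kinv k z = (\<chi> i. if i = k then - (z $ i) else cnj (z $ i))"

text \<open>A smooth embedding of K_n = torus / Kinv k into real^'m, described by its lift F to the
  torus: F is smooth (its composite with the angle parametrisation is smooth), constant on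
  orbits of the involution, injective on the orbit space, and an immersion.\<close>
definition smooth_embedding_K :: "'n::finite \<Rightarrow> (complex^'n \<Rightarrow> real^'m::finite) \<Rightarrow> bool" where
  "smooth_embedding_K k F \<longleftrightarrow>
     smooth_on UNIV (F \<circ> angle_param) \<and>
     (\<forall>z\<in>torus. F (Kinv k z) = F z) \<and>
     (\<forall>z\<in>torus. \<forall>w\<in>torus. F z = F w \<longrightarrow> w = z \<or> w = Kinv k z) \<and>
     (\<forall>t. \<exists>D. ((F \<circ> angle_param) has_derivative D) (at t) \<and> inj D)"

end

(* Write z = (z_k, u) with u the other n - 1 coordinates. As an iterated surface of revolution,
   the torus of the u embeds into (0, \<infinity>) \<times> R^(n-1) via u \<mapsto> (\<rho>(u), y(u)), and conjugating u
   fixes \<rho> and negates y. For odd n the heights pair up into y \<in> C^((n-1)/2), and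
     z \<mapsto> (\<rho> z_k^2, z_k y) \<in> C \<times> C^((n-1)/2) = R^(n+1)
   is invariant under (z_k, u) \<mapsto> (-z_k, conj u). Its value determines \<rho> and z_k^2, hence z_k up
   to a sign, then y up to the same sign, hence u or conj u. The same argument applied to
   derivatives shows that it is an immersion, and it is smooth because its coordinates are
   trigonometric polynomials in the angles. *)

theory Submission
  imports Defs
begin

lemma has_derivative_vec_nth:
  "((\<lambda>x. f x $ j) has_derivative (\<lambda>h. f' h $ j)) F" if "(f has_derivative f') F"
  using bounded_linear.has_derivative[OF bounded_linear_vec_nth that] .

lemma differentiable_vec_componentwise:
  fixes f :: "'a::real_normed_vector \<Rightarrow> real^'m::finite"
  assumes "\<And>j. (\<lambda>x. f x $ j) differentiable (at x within S)"
  shows "f differentiable (at x within S)"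
  unfolding differentiable_componentwise_within[of f]
  using assms by (auto simp: Basis_vec_def inner_axis)

lemma frechet_derivative_vec_nth:
  fixes f :: "'a::real_normed_vector \<Rightarrow> real^'m::finite"
  assumes "f differentiable (at x)"
  shows "frechet_derivative f (at x) h $ j = frechet_derivative (\<lambda>x. f x $ j) (at x) h"
  using frechet_derivative_at[OF has_derivative_vec_nth[OF assms[unfolded frechet_derivative_works]]]
  by (simp add: fun_eq_iff)

lemma Ck_on_UNIV_vec_componentwise:
  fixes f :: "real^'n::finite \<Rightarrow> real^'m::finite"
  assumes "\<And>j. Ck_on k UNIV (\<lambda>x. f x $ j)"
  shows "Ck_on k UNIV f"
  using assms
proof (induction k arbitrary: f)
  case 0
  then show ?case
    using continuous_on_vec_lambda[of UNIV "\<lambda>j x. f x $ j"] by simp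
next
  case (Suc k)
  have diff: "f differentiable (at x)" for x
    using Suc.prems by (auto simp: differentiable_on_eq_differentiable_at intro: differentiable_vec_componentwise)
  have "(\<lambda>x. partial_deriv i f x $ j) = partial_deriv i (\<lambda>x. f x $ j)" for i j
    unfolding partial_deriv_def by (simp add: frechet_derivative_vec_nth[OF diff] fun_eq_iff)
  then have "Ck_on k UNIV (partial_deriv i f)" for i
    using Suc.prems by (intro Suc.IH) simp
  then show ?case
    using diff by (simp add: differentiable_on_def differentiable_at_withinI)
qed

lemma frechet_derivative_add_at:
  assumes "f differentiable (at x)" "g differentiable (at x)"
  shows "frechet_derivative (\<lambda>x. f x + g x) (at x) =
    (\<lambda>h. frechet_derivative f (at x) h + frechet_derivative g (at x) h)"
  by (rule frechet_derivative_at[symmetric] has_derivative_add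
      assms[unfolded frechet_derivative_works])+

lemma frechet_derivative_mult_at:
  fixes f g :: "'a::real_normed_vector \<Rightarrow> 'b::real_normed_algebra"
  assumes "f differentiable (at x)" "g differentiable (at x)"
  shows "frechet_derivative (\<lambda>x. f x * g x) (at x) =
    (\<lambda>h. f x * frechet_derivative g (at x) h + frechet_derivative f (at x) h * g x)"
  by (rule frechet_derivative_at[symmetric] has_derivative_mult
      assms[unfolded frechet_derivative_works])+

lemma frechet_derivative_diff_at:
  assumes "f differentiable (at x)" "g differentiable (at x)"
  shows "frechet_derivative (\<lambda>x. f x - g x) (at x) =
    (\<lambda>h. frechet_derivative f (at x) h - frechet_derivative g (at x) h)"
  by (rule frechet_derivative_at[symmetric] has_derivative_diff
      assms[unfolded frechet_derivative_works])+

lemma has_derivative_cos_vec_nth: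
  fixes t :: "real^'n::finite"
  shows "((\<lambda>t. cos (t $ i)) has_derivative (\<lambda>h. h $ i * - sin (t $ i))) (at t)"
  using has_derivative_cos[OF has_derivative_vec_nth[OF has_derivative_ident]] .

lemma has_derivative_sin_vec_nth:
  fixes t :: "real^'n::finite"
  shows "((\<lambda>t. sin (t $ i)) has_derivative (\<lambda>h. h $ i * cos (t $ i))) (at t)"
  using has_derivative_sin[OF has_derivative_vec_nth[OF has_derivative_ident]] .

lemma frechet_derivative_cos_vec_nth:
  fixes t :: "real^'n::finite"
  shows "frechet_derivative (\<lambda>t. cos (t $ i)) (at t) = (\<lambda>h. - sin (t $ i) * h $ i)"
  by (simp add: frechet_derivative_at[OF has_derivative_cos_vec_nth, symmetric] mult.commute)

lemma frechet_derivative_sin_vec_nth: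
  fixes t :: "real^'n::finite"
  shows "frechet_derivative (\<lambda>t. sin (t $ i)) (at t) = (\<lambda>h. cos (t $ i) * h $ i)"
  by (simp add: frechet_derivative_at[OF has_derivative_sin_vec_nth, symmetric] mult.commute)

inductive trig_poly :: "(real^'n::finite \<Rightarrow> real) \<Rightarrow> bool" where
  trig_poly_const [simp]: "trig_poly (\<lambda>t. c)"
| trig_poly_cos [simp]: "trig_poly (\<lambda>t. cos (t $ i))"
| trig_poly_sin [simp]: "trig_poly (\<lambda>t. sin (t $ i))"
| trig_poly_add [simp]: "trig_poly f \<Longrightarrow> trig_poly g \<Longrightarrow> trig_poly (\<lambda>t. f t + g t)"
| trig_poly_mult [simp]: "trig_poly f \<Longrightarrow> trig_poly g \<Longrightarrow> trig_poly (\<lambda>t. f t * g t)"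

lemma trig_poly_uminus [simp]: "trig_poly f \<Longrightarrow> trig_poly (\<lambda>t. - f t)"
  using trig_poly_mult[OF trig_poly_const[of "-1"]] by simp

lemma trig_poly_diff [simp]: "trig_poly f \<Longrightarrow> trig_poly g \<Longrightarrow> trig_poly (\<lambda>t. f t - g t)"
  using trig_poly_add[OF _ trig_poly_uminus] by simp

lemma trig_poly_differentiable [simp]: "trig_poly f \<Longrightarrow> f differentiable (at t)"
  by (induction rule: trig_poly.induct)
    (auto intro: differentiableI has_derivative_cos_vec_nth has_derivative_sin_vec_nth)

lemmas frechet_derivative_trig_poly_simps =
  frechet_derivative_add_at frechet_derivative_diff_at frechet_derivative_mult_at
  frechet_derivative_cos_vec_nth frechet_derivative_sin_vec_nth

lemma trig_poly_partial_deriv: "trig_poly f \<Longrightarrow> trig_poly (partial_deriv i f)"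
  by (induction rule: trig_poly.induct)
    (simp_all add: partial_deriv_def frechet_derivative_trig_poly_simps)

lemma trig_poly_Ck_on: "trig_poly f \<Longrightarrow> Ck_on k UNIV f"
proof (induction k arbitrary: f)
  case 0
  then show ?case
    by (simp add: continuous_at_imp_continuous_on differentiable_imp_continuous_within)
next
  case (Suc k)
  then show ?case
    by (simp add: differentiable_on_def differentiable_at_withinI trig_poly_partial_deriv)
qed

lemma angle_param_nth [simp]: "angle_param t $ i = cis (t $ i)"
  by (simp add: angle_param_def)

lemma angle_param_in_torus: "angle_param t \<in> torus"
  by (simp add: torus_def)

lemma Kinv_in_torus: "z \<in> torus \<Longrightarrow> Kinv k z \<in> torus"
  by (simp add: torus_def Kinv_def)

lemma unit_rotation_eq_0:
  fixes a b x y :: real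
  assumes "a\<^sup>2 + b\<^sup>2 = 1" "x * a - y * b = 0" "x * b + y * a = 0"
  shows "x = 0 \<and> y = 0"
proof -
  have "Complex x y * Complex a b = 0"
    using assms(2,3) by (simp add: complex_eq_iff algebra_simps)
  moreover have "Complex a b \<noteq> 0"
    using assms(1) by (auto simp: complex_eq_iff)
  ultimately have "Complex x y = 0"
    by simp
  then show ?thesis
    by (simp add: complex_eq_iff)
qed

lemma polar_form_unique:
  fixes a b :: complex
  assumes "0 < r" "0 < s" "norm a = 1" "norm b = 1" "of_real r * a = of_real s * b"
  shows "r = s \<and> a = b"
proof -
  have "r = s"
    using arg_cong[OF assms(5), of norm] assms(1-4) by (simp add: norm_mult)
  then show ?thesis
    using assms(1,5) by simp
qed

(* The torus (S^1)^m as an iterated surface of revolution in (0, \<infinity>) \<times> R^m: each step revolves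
   the previous torus, whose distance from the axis lies in (0, 2^(m+1)), around a circle of
   radius 2^(m+1). *)
fun torus_radius :: "'n list \<Rightarrow> complex^'n \<Rightarrow> real" where
  "torus_radius [] z = 1"
| "torus_radius (i # xs) z = 2 ^ Suc (length xs) + torus_radius xs z * Re (z $ i)"

fun torus_heights :: "'n list \<Rightarrow> complex^'n \<Rightarrow> real list" where
  "torus_heights [] z = []"
| "torus_heights (i # xs) z = torus_radius xs z * Im (z $ i) # torus_heights xs z"

lemma length_torus_heights [simp]: "length (torus_heights xs z) = length xs"
  by (induction xs) auto

lemma torus_radius_bounds:
  assumes "\<And>i. \<bar>Re (z $ i)\<bar> \<le> 1"
  shows "0 < torus_radius xs z \<and> torus_radius xs z < 2 ^ Suc (length xs)"
proof (induction xs)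
  case (Cons i xs)
  have "\<bar>torus_radius xs z * Re (z $ i)\<bar> \<le> torus_radius xs z"
    using Cons assms[of i] by (simp add: abs_mult mult_left_le)
  moreover have "(2::real) ^ Suc (Suc (length xs)) = 2 * 2 ^ Suc (length xs)"
    by simp
  ultimately show ?case
    using Cons abs_le_D1 abs_le_D2 by fastforce
qed simp

lemma torus_radius_pos:
  assumes "z \<in> torus"
  shows "0 < torus_radius xs z"
proof -
  have "\<bar>Re (z $ i)\<bar> \<le> 1" for i
    using assms abs_Re_le_cmod[of "z $ i"] by (simp add: torus_def)
  then show ?thesis
    using torus_radius_bounds by blast
qed

lemma Kinv_nth: "Kinv k z $ i = (if i = k then - z $ i else cnj (z $ i))"
  by (simp add: Kinv_def)

lemma torus_radius_Kinv: "k \<notin> set xs \<Longrightarrow> torus_radius xs (Kinv k z) = torus_radius xs z"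
  by (induction xs) (auto simp: Kinv_nth)

lemma torus_heights_Kinv:
  "k \<notin> set xs \<Longrightarrow> torus_heights xs (Kinv k z) = map uminus (torus_heights xs z)"
  by (induction xs) (auto simp: Kinv_nth torus_radius_Kinv)

lemma torus_coordinates_eq_imp_nth_eq:
  assumes "z \<in> torus" "w \<in> torus"
    and "torus_radius xs w = torus_radius xs z" "torus_heights xs w = torus_heights xs z"
    and "i \<in> set xs"
  shows "w $ i = z $ i"
  using assms(3-)
proof (induction xs)
  case (Cons j xs)
  have "of_real (torus_radius xs w) * w $ j = of_real (torus_radius xs z) * z $ j"
    using Cons.prems(1,2) by (simp add: complex_eq_iff)
  then have "torus_radius xs w = torus_radius xs z \<and> w $ j = z $ j"
    using assms(1,2) by (intro polar_form_unique) (auto simp: torus_radius_pos torus_def)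
  then show ?case
    using Cons by auto
qed simp

lemma trig_poly_torus_radius: "trig_poly (\<lambda>t. torus_radius xs (angle_param t))"
  by (induction xs) simp_all

lemma trig_poly_torus_heights:
  "a < length xs \<Longrightarrow> trig_poly (\<lambda>t. torus_heights xs (angle_param t) ! a)"
proof (induction xs arbitrary: a)
  case (Cons i xs)
  then show ?case
    by (cases a) (simp_all add: trig_poly_torus_radius)
qed simp

lemma torus_coordinates_immersion:
  assumes "frechet_derivative (\<lambda>t. torus_radius xs (angle_param t)) (at t) h = 0"
    and "\<forall>a<length xs. frechet_derivative (\<lambda>t. torus_heights xs (angle_param t) ! a) (at t) h = 0"
    and "i \<in> set xs"
  shows "h $ i = 0"
  using assms
proof (induction xs)
  case (Cons j xs)
  let ?r = "\<lambda>t. torus_radius xs (angle_param t)"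
  let ?dr = "frechet_derivative ?r (at t) h"
  have "?dr * cos (t $ j) - (?r t * h $ j) * sin (t $ j) = 0"
    using Cons.prems(1)
    by (simp add: frechet_derivative_trig_poly_simps trig_poly_torus_radius algebra_simps)
  moreover have "?dr * sin (t $ j) + (?r t * h $ j) * cos (t $ j) = 0"
    using Cons.prems(2)[rule_format, of 0]
    by (simp add: frechet_derivative_trig_poly_simps trig_poly_torus_radius algebra_simps)
  ultimately have "?dr = 0 \<and> ?r t * h $ j = 0"
    by (intro unit_rotation_eq_0) simp_all
  moreover have "?r t > 0"
    by (simp add: torus_radius_pos angle_param_in_torus)
  moreover have "\<forall>a<length xs. frechet_derivative (\<lambda>t. torus_heights xs (angle_param t) ! a) (at t) h = 0"
  proof (intro allI impI)
    fix a
    assume "a < length xs"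
    then show "frechet_derivative (\<lambda>t. torus_heights xs (angle_param t) ! a) (at t) h = 0"
      using Cons.prems(2)[rule_format, of "Suc a"] by simp
  qed
  ultimately show ?case
    using Cons.IH Cons.prems(3) by auto
qed simp

fun pair_up :: "real list \<Rightarrow> complex list" where
  "pair_up (x # y # ys) = Complex x y # pair_up ys"
| "pair_up _ = []"

lemma length_pair_up [simp]: "length (pair_up xs) = length xs div 2"
  by (induction xs rule: pair_up.induct) auto

lemma pair_up_map_uminus: "pair_up (map uminus xs) = map uminus (pair_up xs)"
  by (induction xs rule: pair_up.induct) (auto simp: complex_eq_iff)

lemma nth_pair_up:
  "a < length xs div 2 \<Longrightarrow> pair_up xs ! a = Complex (xs ! (2 * a)) (xs ! Suc (2 * a))"
proof (induction xs arbitrary: a rule: pair_up.induct)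
  case (1 x y ys)
  then show ?case
    by (cases a) auto
qed auto

lemma nth_eq_pair_up_nth:
  assumes "even (length xs)" "b < length xs"
  shows "xs ! b = (if even b then Re else Im) (pair_up xs ! (b div 2))"
proof -
  have "b div 2 < length xs div 2"
    using assms by (auto elim!: evenE)
  then show ?thesis
    by (simp add: nth_pair_up)
qed

lemma pair_up_inj:
  assumes "even (length xs)" "length ys = length xs" "pair_up xs = pair_up ys"
  shows "xs = ys"
proof (rule nth_equalityI)
  fix b
  assume "b < length xs"
  then show "xs ! b = ys ! b"
    using assms nth_eq_pair_up_nth[of xs b] nth_eq_pair_up_nth[of ys b] by simp
qed (use assms in simp)

definition K_complex_coords :: "'n::finite \<Rightarrow> 'n list \<Rightarrow> complex^'n \<Rightarrow> complex list" where
  "K_complex_coords k xs z =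
     of_real (torus_radius xs z) * (z $ k)\<^sup>2 # map (\<lambda>c. z $ k * c) (pair_up (torus_heights xs z))"

lemma length_K_complex_coords [simp]: "length (K_complex_coords k xs z) = Suc (length xs div 2)"
  by (simp add: K_complex_coords_def)

lemma K_complex_coords_Kinv: "k \<notin> set xs \<Longrightarrow> K_complex_coords k xs (Kinv k z) = K_complex_coords k xs z"
  by (simp add: K_complex_coords_def Kinv_nth torus_radius_Kinv torus_heights_Kinv pair_up_map_uminus)

lemma K_complex_coords_eq_imp_nth_eq_or_neg:
  assumes "z \<in> torus" "w \<in> torus" "K_complex_coords k xs w = K_complex_coords k xs z"
  shows "w $ k = z $ k \<or> w $ k = - z $ k"
proof -
  have "of_real (torus_radius xs w) * (w $ k)\<^sup>2 = of_real (torus_radius xs z) * (z $ k)\<^sup>2"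
    using assms(3) by (simp add: K_complex_coords_def)
  then have "(w $ k)\<^sup>2 = (z $ k)\<^sup>2"
    using polar_form_unique[OF torus_radius_pos[OF assms(2)] torus_radius_pos[OF assms(1)]] assms(1,2)
    by (simp add: torus_def norm_power)
  then show ?thesis
    by (simp add: power2_eq_iff)
qed

lemma K_complex_coords_eq_imp_eq:
  assumes "set xs = UNIV - {k}" "even (length xs)" "z \<in> torus" "w \<in> torus"
    and "K_complex_coords k xs w = K_complex_coords k xs z" "w $ k = z $ k"
  shows "w = z"
proof -
  have "norm (z $ k) = 1"
    using assms(3) by (simp add: torus_def)
  then have "z $ k \<noteq> 0"
    by auto
  then have "torus_radius xs w = torus_radius xs z"
    and "pair_up (torus_heights xs w) = pair_up (torus_heights xs z)"
    using assms(5,6) by (auto simp: K_complex_coords_def dest: list.inj_map_strong[rotated])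
  moreover from this(2) have "torus_heights xs w = torus_heights xs z"
    using assms(2) by (intro pair_up_inj) simp_all
  ultimately have "w $ i = z $ i" if "i \<in> set xs" for i
    using torus_coordinates_eq_imp_nth_eq[OF assms(3,4)] that by blast
  then show ?thesis
    using assms(1,6) by (auto simp: vec_eq_iff)
qed

lemma K_complex_coords_eq_imp:
  assumes "set xs = UNIV - {k}" "even (length xs)" "z \<in> torus" "w \<in> torus"
    and "K_complex_coords k xs w = K_complex_coords k xs z"
  shows "w = z \<or> w = Kinv k z"
  using K_complex_coords_eq_imp_nth_eq_or_neg[OF assms(3-5)]
proof
  assume "w $ k = z $ k"
  then show ?thesis
    using K_complex_coords_eq_imp_eq[OF assms] by simp
next
  assume "w $ k = - z $ k"
  then have "w = Kinv k z"
    using assms K_complex_coords_Kinv[of k xs z]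
    by (intro K_complex_coords_eq_imp_eq[of xs k]) (auto simp: Kinv_in_torus Kinv_nth)
  then show ?thesis ..
qed

lemma trig_poly_K_complex_coords:
  assumes "a < Suc (length xs div 2)"
  shows "trig_poly (\<lambda>t. Re (K_complex_coords k xs (angle_param t) ! a)) \<and>
    trig_poly (\<lambda>t. Im (K_complex_coords k xs (angle_param t) ! a))"
proof (cases a)
  case 0
  then show ?thesis
    by (simp add: K_complex_coords_def trig_poly_torus_radius Re_power2 Im_power2 power2_eq_square)
next
  case (Suc b)
  then have "2 * b < length xs" "Suc (2 * b) < length xs"
    using assms by auto
  then show ?thesis
    using Suc by (simp add: K_complex_coords_def nth_pair_up trig_poly_torus_heights)
qed

lemma K_complex_coords_immersion:
  fixes t h :: "real^'n::finite"
  assumes "set xs = UNIV - {k}" "even (length xs)"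
    and Re_coords: "\<And>a. a < Suc (length xs div 2) \<Longrightarrow>
      frechet_derivative (\<lambda>t. Re (K_complex_coords k xs (angle_param t) ! a)) (at t) h = 0"
    and Im_coords: "\<And>a. a < Suc (length xs div 2) \<Longrightarrow>
      frechet_derivative (\<lambda>t. Im (K_complex_coords k xs (angle_param t) ! a)) (at t) h = 0"
  shows "h = 0"
proof -
  let ?R = "\<lambda>t. torus_radius xs (angle_param t)"
  let ?dR = "frechet_derivative ?R (at t) h"
  let ?dH = "\<lambda>b. frechet_derivative (\<lambda>t. torus_heights xs (angle_param t) ! b) (at t) h"
  let ?c = "cos (t $ k)" and ?s = "sin (t $ k)"
  have "(?c * ?c - ?s * ?s)\<^sup>2 + (2 * ?c * ?s)\<^sup>2 = (?c\<^sup>2 + ?s\<^sup>2)\<^sup>2"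
    by algebra
  then have unit: "(?c * ?c - ?s * ?s)\<^sup>2 + (2 * ?c * ?s)\<^sup>2 = 1"
    by simp
  (* d(\<rho> z_k^2) = (d\<rho> + 2 i \<rho> h_k) z_k^2 *)
  have "?dR * (?c * ?c - ?s * ?s) - (2 * ?R t * h $ k) * (2 * ?c * ?s) = 0"
    using Re_coords[of 0]
    by (simp add: K_complex_coords_def Re_power2 power2_eq_square frechet_derivative_trig_poly_simps
        trig_poly_torus_radius algebra_simps)
  moreover have "?dR * (2 * ?c * ?s) + (2 * ?R t * h $ k) * (?c * ?c - ?s * ?s) = 0"
    using Im_coords[of 0]
    by (simp add: K_complex_coords_def Im_power2 power2_eq_square frechet_derivative_trig_poly_simps
        trig_poly_torus_radius algebra_simps)
  ultimately have "?dR = 0 \<and> 2 * ?R t * h $ k = 0"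
    by (rule unit_rotation_eq_0[OF unit])
  moreover have "?R t > 0"
    by (simp add: torus_radius_pos angle_param_in_torus)
  ultimately have dR: "?dR = 0" and hk: "h $ k = 0"
    by auto
  have "?dH b = 0" if "b < length xs" for b
  proof -
    define c where "c = b div 2"
    have c: "2 * c < length xs" "Suc (2 * c) < length xs" "c < length xs div 2"
      using that assms(2) by (auto simp: c_def elim!: evenE) presburger
    have "?dH (2 * c) * ?c - ?dH (Suc (2 * c)) * ?s = 0"
      using Re_coords[of "Suc c"] c hk
      by (simp add: K_complex_coords_def nth_pair_up frechet_derivative_trig_poly_simps
          trig_poly_torus_heights algebra_simps)
    moreover have "?dH (2 * c) * ?s + ?dH (Suc (2 * c)) * ?c = 0"
      using Im_coords[of "Suc c"] c hk
      by (simp add: K_complex_coords_def nth_pair_up frechet_derivative_trig_poly_simps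
          trig_poly_torus_heights algebra_simps)
    ultimately have "?dH (2 * c) = 0 \<and> ?dH (Suc (2 * c)) = 0"
      by (intro unit_rotation_eq_0) simp_all
    moreover have "b = 2 * c \<or> b = Suc (2 * c)"
      by (auto simp: c_def)
    ultimately show ?thesis
      by auto
  qed
  then have "h $ i = 0" if "i \<in> set xs" for i
    using torus_coordinates_immersion[OF dR] that by blast
  then show ?thesis
    using hk assms(1) by (auto simp: vec_eq_iff)
qed

definition K_embedding :: "'n::finite \<Rightarrow> 'n list \<Rightarrow> ('m::finite \<Rightarrow> bool \<times> nat) \<Rightarrow> complex^'n \<Rightarrow> real^'m"
  where "K_embedding k xs e z = (\<chi> j. (if fst (e j) then Re else Im) (K_complex_coords k xs z ! snd (e j)))"

lemma K_embedding_Kinv: "k \<notin> set xs \<Longrightarrow> K_embedding k xs e (Kinv k z) = K_embedding k xs e z"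
  by (simp add: K_embedding_def K_complex_coords_Kinv)

lemma K_embedding_eq_imp_K_complex_coords_eq:
  assumes "range e = UNIV \<times> {..<Suc (length xs div 2)}"
    and "K_embedding k xs e w = K_embedding k xs e z"
  shows "K_complex_coords k xs w = K_complex_coords k xs z"
proof (rule nth_equalityI)
  fix a
  assume "a < length (K_complex_coords k xs w)"
  then have "(b, a) \<in> range e" for b
    using assms(1) by simp
  then obtain j1 j2 where j: "(True, a) = e j1" "(False, a) = e j2"
    by blast
  have "K_embedding k xs e w $ j = K_embedding k xs e z $ j" for j
    using assms(2) by simp
  from this[of j1] this[of j2] show "K_complex_coords k xs w ! a = K_complex_coords k xs z ! a"
    by (simp add: K_embedding_def complex_eq_iff flip: j)
qed simp

lemma K_embedding_eq_imp:
  assumes "set xs = UNIV - {k}" "even (length xs)" "range e = UNIV \<times> {..<Suc (length xs div 2)}"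
    and "z \<in> torus" "w \<in> torus" "K_embedding k xs e w = K_embedding k xs e z"
  shows "w = z \<or> w = Kinv k z"
  using assms by (intro K_complex_coords_eq_imp K_embedding_eq_imp_K_complex_coords_eq)

lemma trig_poly_K_embedding_angle_param:
  assumes "range e = UNIV \<times> {..<Suc (length xs div 2)}"
  shows "trig_poly (\<lambda>t. (K_embedding k xs e \<circ> angle_param) t $ j)"
proof -
  have "e j \<in> UNIV \<times> {..<Suc (length xs div 2)}"
    using assms by blast
  then have "snd (e j) < Suc (length xs div 2)"
    by auto
  then show ?thesis
    by (simp add: K_embedding_def trig_poly_K_complex_coords)
qed

lemma K_embedding_smooth:
  assumes "range e = UNIV \<times> {..<Suc (length xs div 2)}"
  shows "smooth_on UNIV (K_embedding k xs e \<circ> angle_param)"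
  unfolding smooth_on_def
  by (intro allI Ck_on_UNIV_vec_componentwise trig_poly_Ck_on trig_poly_K_embedding_angle_param[OF assms])

lemma K_embedding_immersion:
  assumes "set xs = UNIV - {k}" "even (length xs)"
    and e: "range e = UNIV \<times> {..<Suc (length xs div 2)}"
  shows "\<exists>D. ((K_embedding k xs e \<circ> angle_param) has_derivative D) (at t) \<and> inj D"
proof -
  let ?G = "K_embedding k xs e \<circ> angle_param"
  let ?D = "frechet_derivative ?G (at t)"
  have diff: "?G differentiable (at t)"
    by (intro differentiable_vec_componentwise trig_poly_differentiable
        trig_poly_K_embedding_angle_param[OF e])
  then have G: "(?G has_derivative ?D) (at t)"
    by (simp add: frechet_derivative_works[symmetric])
  have "h = 0" if "?D h = 0" for h
  proof -
    have coord: "frechet_derivative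
        (\<lambda>t. (if b then Re else Im) (K_complex_coords k xs (angle_param t) ! a)) (at t) h = 0"
      if "a < Suc (length xs div 2)" for a b
    proof -
      have "(b, a) \<in> range e"
        using e that by simp
      then obtain j where "(b, a) = e j"
        by blast
      then show ?thesis
        using frechet_derivative_vec_nth[OF diff, of h j] \<open>?D h = 0\<close>
        by (simp add: K_embedding_def flip: \<open>(b, a) = e j\<close>)
    qed
    show "h = 0"
      using coord[of _ True] coord[of _ False] by (intro K_complex_coords_immersion[OF assms(1,2)]) simp_all
  qed
  then have "inj ?D"
    using G by (simp add: has_derivative_linear linear_injective_0)
  then show ?thesis
    using G by blast
qed

theorem mainTheorem12:
  fixes k :: "'n::finite"
  assumes "odd CARD('n)"
    and "CARD('m::finite) = CARD('n) + 1"
  shows "\<exists>F :: complex^'n \<Rightarrow> real^'m. smooth_embedding_K k F"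
proof -
  obtain xs where xs: "set xs = UNIV - {k}" "distinct xs"
    using finite_distinct_list[of "UNIV - {k}"] by auto
  then have "length xs = CARD('n) - 1"
    using distinct_card[OF xs(2)] by (simp add: card_Diff_singleton)
  then have even: "even (length xs)"
    using assms(1) by (simp add: card_gt_0_iff)
  let ?coords = "UNIV \<times> {..<Suc (length xs div 2)} :: (bool \<times> nat) set"
  have "card ?coords = CARD('m)"
    using even assms \<open>length xs = CARD('n) - 1\<close> by (auto simp: card_cartesian_product elim!: evenE)
  then obtain e :: "'m \<Rightarrow> bool \<times> nat" where "bij_betw e UNIV ?coords"
    using finite_same_card_bij[of "UNIV :: 'm set" ?coords] by auto
  then have e: "range e = ?coords"
    by (simp add: bij_betw_def)
  have "k \<notin> set xs"
    using xs(1) by simp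
  then have "smooth_embedding_K k (K_embedding k xs e)"
    unfolding smooth_embedding_K_def
    using K_embedding_smooth[OF e] K_embedding_Kinv K_embedding_immersion[OF xs(1) even e]
      K_embedding_eq_imp[OF xs(1) even e]
    by metis
  then show ?thesis
    by blast
qed

end
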